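(* Let $W\in\mathcal{P}(\mathcal{Y}|\mathcal{X})$ with $C(W)>0$, $\delta>0$ and $\epsilon\in(0,1)$, and let $R_N=C(W)+\sqrt{V_\epsilon(W)/N}\,\Phi^{-1}(\epsilon)$. There is $N_{\mathrm o}(W,\epsilon,\delta)\in\mathbb{Z}^+$ such that for every $N\ge N_{\mathrm o}(W,\epsilon,\delta)$, every $(N,R_N)$ constant composition code whose common composition $Q_N$ belongs to $\mathcal{S}_3(\delta)$ has average error probability strictly greater than $\epsilon$.
   Context: $\mathcal{X},\mathcal{Y}$ finite; memoryless channel. An $(N,R)$ constant composition code: encoder $\{1,\dots,\lceil e^{NR}\rceil\}\to\mathcal{X}^N$ whose codewords all have the same empirical distribution (the common composition), and decoder $\mathcal{Y}^N\to\mathcal{M}$; average error over uniform messages. $C(W)$ capacity; $\Phi$ standard Gaussian CDF. $\mathcal{P}^*_W=\{P:I(P;W)=C(W)\}$; $\mathcal{S}_3(\delta)=\{P\in\mathcal{P}(\mathcal{X}):\min_{P^*\in\mathcal{P}^*_W}\|P-P^*\|_2>\delta\}$. $q_P(y)=\sum_xP(x)W(y|x)$, $V(P,W)=\sum_{x,y}P(x)W(y|x)[\ln\frac{W(y|x)}{q_P(y)}-\sum_bW(b|x)\ln\frac{W(b|x)}{q_P(b)}]^2$, $V_\epsilon(W)=\min_{Q\in\mathcal{P}^*_W}V(Q,W)$ for $\epsilon<1/2$ and $\max_{Q\in\mathcal{P}^*_W}V(Q,W)$ for $\epsilon\ge1/2$. *)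

theory Defs
  imports "HOL-Probability.Probability"
begin

definition is_pd :: "('a::finite \<Rightarrow> real) \<Rightarrow> bool" where
  "is_pd P \<longleftrightarrow> (\<forall>x. P x \<ge> 0) \<and> (\<Sum>x\<in>UNIV. P x) = 1"

text \<open>Channel W y x = W(y|x): a stochastic matrix.\<close>
definition is_channel :: "('y::finite \<Rightarrow> 'x::finite \<Rightarrow> real) \<Rightarrow> bool" where
  "is_channel W \<longleftrightarrow> (\<forall>x. is_pd (\<lambda>y. W y x))"

definition outdist :: "('x::finite \<Rightarrow> real) \<Rightarrow> ('y::finite \<Rightarrow> 'x \<Rightarrow> real) \<Rightarrow> 'y \<Rightarrow> real" where
  "outdist P W y = (\<Sum>x\<in>UNIV. P x * W y x)"

definition mutual_info :: "('x::finite \<Rightarrow> real) \<Rightarrow> ('y::finite \<Rightarrow> 'x \<Rightarrow> real) \<Rightarrow> real" where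
  "mutual_info P W = (\<Sum>x\<in>UNIV. \<Sum>y\<in>UNIV.
     (if P x * W y x = 0 then 0 else P x * W y x * ln (W y x / outdist P W y)))"

definition capacity :: "('y::finite \<Rightarrow> 'x::finite \<Rightarrow> real) \<Rightarrow> real" where
  "capacity W = (SUP P\<in>{P. is_pd P}. mutual_info P W)"

definition cap_achieving :: "('y::finite \<Rightarrow> 'x::finite \<Rightarrow> real) \<Rightarrow> ('x \<Rightarrow> real) set" where
  "cap_achieving W = {P. is_pd P \<and> mutual_info P W = capacity W}"

definition info_dens :: "('x::finite \<Rightarrow> real) \<Rightarrow> ('y::finite \<Rightarrow> 'x \<Rightarrow> real) \<Rightarrow> 'x \<Rightarrow> 'y \<Rightarrow> real" where
  "info_dens P W x y = (if W y x = 0 then 0 else ln (W y x / outdist P W y))"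

definition cond_var :: "('x::finite \<Rightarrow> real) \<Rightarrow> ('y::finite \<Rightarrow> 'x \<Rightarrow> real) \<Rightarrow> real" where
  "cond_var P W = (\<Sum>x\<in>UNIV. \<Sum>y\<in>UNIV. P x * W y x *
     (info_dens P W x y - (\<Sum>b\<in>UNIV. W b x * info_dens P W x b))\<^sup>2)"

definition V_eps :: "real \<Rightarrow> ('y::finite \<Rightarrow> 'x::finite \<Rightarrow> real) \<Rightarrow> real" where
  "V_eps \<epsilon> W = (if \<epsilon> < 1/2 then (INF Q\<in>cap_achieving W. cond_var Q W)
                   else (SUP Q\<in>cap_achieving W. cond_var Q W))"

definition dist2 :: "('x::finite \<Rightarrow> real) \<Rightarrow> ('x \<Rightarrow> real) \<Rightarrow> real" where
  "dist2 P Q = sqrt (\<Sum>x\<in>UNIV. (P x - Q x)\<^sup>2)"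

text \<open>S_3(delta): distributions at l2-distance more than delta from every capacity achieving one
  (the min over the compact set P^*_W is written as an Inf).\<close>
definition S3 :: "('y::finite \<Rightarrow> 'x::finite \<Rightarrow> real) \<Rightarrow> real \<Rightarrow> ('x \<Rightarrow> real) set" where
  "S3 W \<delta> = {P. is_pd P \<and> (INF Ps\<in>cap_achieving W. dist2 P Ps) > \<delta>}"

definition Phi :: "real \<Rightarrow> real" where
  "Phi t = (LINT s:{..t}|lborel. std_normal_density s)"

definition Phi_inv :: "real \<Rightarrow> real" where
  "Phi_inv e = (THE t. Phi t = e)"

definition composition :: "'x list \<Rightarrow> 'x \<Rightarrow> real" where
  "composition xs x = real (length (filter (\<lambda>z. z = x) xs)) / real (length xs)"

definition num_msgs :: "nat \<Rightarrow> real \<Rightarrow> nat" where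
  "num_msgs N R = nat \<lceil>exp (real N * R)\<rceil>"

definition chan_prob :: "('y::finite \<Rightarrow> 'x \<Rightarrow> real) \<Rightarrow> 'x list \<Rightarrow> 'y list \<Rightarrow> real" where
  "chan_prob W xs ys = (\<Prod>i<length xs. W (ys ! i) (xs ! i))"

definition avg_error ::
  "('y::finite \<Rightarrow> 'x \<Rightarrow> real) \<Rightarrow> nat \<Rightarrow> nat \<Rightarrow> (nat \<Rightarrow> 'x list) \<Rightarrow> ('y list \<Rightarrow> nat) \<Rightarrow> real" where
  "avg_error W N M enc dec = (1 / real M) * (\<Sum>m\<in>{1..M}.
      \<Sum>ys\<in>{ys. length ys = N \<and> dec ys \<noteq> m}. chan_prob W (enc m) ys)"

text \<open>An (N,R) constant composition code with common composition Q (decoder values outside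
  the message set count as errors).\<close>
definition cc_code ::
  "nat \<Rightarrow> real \<Rightarrow> ('x \<Rightarrow> real) \<Rightarrow> (nat \<Rightarrow> 'x list) \<Rightarrow> ('y list \<Rightarrow> nat) \<Rightarrow> bool" where
  "cc_code N R Q enc dec \<longleftrightarrow>
     (\<forall>m\<in>{1..num_msgs N R}. length (enc m) = N \<and> composition (enc m) = Q)"

end

theory Submission
  imports Defs
begin

(* The mutual information I(.;W) is continuous on the compact probability simplex and is maximised
   exactly on the capacity achieving distributions, so on S_3(delta) it stays below C(W) - eta for
   some eta > 0, while R_N tends to C(W). For a codeword x of composition Q put
   L(y) = sum_i ln (W(y_i|x_i) / q_Q(y_i)); then W^N(y|x) <= exp (L(y)) q_Q^N(y), and L has mean
   N I(Q;W) and variance O(N) under W^N(.|x). Splitting every decoding region according to whether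
   L exceeds N I(Q;W) + t and applying Chebyshev's inequality gives
   1 - P_e <= O(N) / t^2 + exp (N I(Q;W) + t) / M with M >= exp (N R_N), and t = N eta / 4 makes
   the right hand side O(1/N). *)

lemma finite_lists_length_UNIV: "finite {ys :: 'a::finite list. length ys = n}"
  using finite_lists_length_eq[of "UNIV :: 'a set" n] by simp

lemma sum_lists_length_Suc:
  fixes F :: "'a::finite list \<Rightarrow> 'b::comm_monoid_add"
  shows "(\<Sum>ys | length ys = Suc n. F ys) = (\<Sum>y\<in>UNIV. \<Sum>ys | length ys = n. F (y # ys))"
proof -
  let ?cons = "\<lambda>(y, ys). y # ys"
  have "inj_on ?cons (UNIV \<times> {ys :: 'a list. length ys = n})"
    by (auto simp: inj_on_def)
  moreover have "{ys. length ys = Suc n} = ?cons ` (UNIV \<times> {ys. length ys = n})"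
    by (auto simp: image_def length_Suc_conv)
  ultimately have "(\<Sum>ys | length ys = Suc n. F ys) = (\<Sum>p\<in>UNIV \<times> {ys. length ys = n}. F (?cons p))"
    using sum.reindex[unfolded comp_def] by metis
  then show ?thesis
    by (simp add: sum.cartesian_product case_prod_unfold)
qed

lemma sum_lists_length_prod:
  fixes f :: "nat \<Rightarrow> 'a::finite \<Rightarrow> 'b::comm_semiring_1"
  shows "(\<Sum>ys | length ys = n. \<Prod>i<n. f i (ys ! i)) = (\<Prod>i<n. \<Sum>y\<in>UNIV. f i y)"
proof (induction n arbitrary: f)
  case 0
  then show ?case by simp
next
  case (Suc n)
  have "(\<Sum>ys | length ys = Suc n. \<Prod>i<Suc n. f i (ys ! i))
      = (\<Sum>y\<in>UNIV. f 0 y * (\<Sum>ys | length ys = n. \<Prod>i<n. f (Suc i) (ys ! i)))"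
    unfolding sum_lists_length_Suc prod.lessThan_Suc_shift by (simp add: sum_distrib_left)
  also have "\<dots> = (\<Prod>i<Suc n. \<Sum>y\<in>UNIV. f i y)"
    unfolding Suc.IH[of "\<lambda>i. f (Suc i)"] prod.lessThan_Suc_shift by (simp add: sum_distrib_right)
  finally show ?case .
qed

lemma is_pd_le_1: "is_pd P \<Longrightarrow> P x \<le> 1"
  unfolding is_pd_def using member_le_sum[of x UNIV P] by auto

lemma channel_nonneg: "is_channel W \<Longrightarrow> 0 \<le> W y x"
  by (simp add: is_channel_def is_pd_def)

lemma channel_le_1: "is_channel W \<Longrightarrow> W y x \<le> 1"
  using is_pd_le_1[of "\<lambda>y. W y x" y] by (simp add: is_channel_def)

lemma channel_sum_1: "is_channel W \<Longrightarrow> (\<Sum>y\<in>UNIV. W y x) = 1"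
  by (simp add: is_channel_def is_pd_def)

lemma chan_prob_nonneg: "is_channel W \<Longrightarrow> 0 \<le> chan_prob W xs ys"
  unfolding chan_prob_def by (simp add: prod_nonneg channel_nonneg)

lemma chan_prob_Cons: "chan_prob W (x # xs) (y # ys) = W y x * chan_prob W xs ys"
  unfolding chan_prob_def length_Cons prod.lessThan_Suc_shift by simp

lemma sum_chan_prob:
  assumes "is_channel W"
  shows "(\<Sum>ys | length ys = length xs. chan_prob W xs ys) = 1"
  using sum_lists_length_prod[of "\<lambda>i y. W y (xs ! i)" "length xs"] assms
  by (simp add: chan_prob_def channel_sum_1)

text \<open>The positions are independent under the product channel and each term is centred, so all
  cross terms vanish.\<close>

lemma sum_chan_prob_centered_square:
  assumes W: "is_channel W" and centered: "\<And>x. (\<Sum>y\<in>UNIV. W y x * g x y) = 0"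
  shows "(\<Sum>ys | length ys = length xs. chan_prob W xs ys * (\<Sum>i<length xs. g (xs ! i) (ys ! i))\<^sup>2)
     = (\<Sum>i<length xs. \<Sum>y\<in>UNIV. W y (xs ! i) * (g (xs ! i) y)\<^sup>2)"
proof (induction xs)
  case Nil
  then show ?case by (simp add: chan_prob_def)
next
  case (Cons x xs)
  let ?Z = "\<lambda>ys. \<Sum>i<length xs. g (xs ! i) (ys ! i)"
  let ?P = "\<lambda>ys. chan_prob W xs ys"
  let ?E = "\<lambda>h. \<Sum>ys | length ys = length xs. h ys"
  have "(\<Sum>ys | length ys = length (x # xs).
          chan_prob W (x # xs) ys * (\<Sum>i<length (x # xs). g ((x # xs) ! i) (ys ! i))\<^sup>2)
      = (\<Sum>y\<in>UNIV. ?E (\<lambda>ys. W y x * ?P ys * (g x y + ?Z ys)\<^sup>2))"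
    unfolding length_Cons sum_lists_length_Suc chan_prob_Cons sum.lessThan_Suc_shift by simp
  also have "\<dots> = (\<Sum>y\<in>UNIV. W y x * (g x y)\<^sup>2 * ?E ?P
        + 2 * (W y x * g x y) * ?E (\<lambda>ys. ?P ys * ?Z ys) + W y x * ?E (\<lambda>ys. ?P ys * (?Z ys)\<^sup>2))"
    by (simp add: power2_eq_square algebra_simps sum.distrib sum_distrib_left)
  also have "\<dots> = (\<Sum>y\<in>UNIV. W y x * (g x y)\<^sup>2) * ?E ?P
        + (\<Sum>y\<in>UNIV. 2 * (W y x * g x y)) * ?E (\<lambda>ys. ?P ys * ?Z ys)
        + (\<Sum>y\<in>UNIV. W y x) * ?E (\<lambda>ys. ?P ys * (?Z ys)\<^sup>2)"
    by (simp only: sum.distrib sum_distrib_right)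
  also have "\<dots> = (\<Sum>y\<in>UNIV. W y x * (g x y)\<^sup>2)
        + (\<Sum>i<length xs. \<Sum>y\<in>UNIV. W y (xs ! i) * (g (xs ! i) y)\<^sup>2)"
    using centered[of x] Cons.IH sum_chan_prob[OF W, of xs]
    by (simp add: channel_sum_1[OF W] sum_distrib_left[symmetric])
  also have "\<dots> = (\<Sum>i<length (x # xs). \<Sum>y\<in>UNIV. W y ((x # xs) ! i) * (g ((x # xs) ! i) y)\<^sup>2)"
    unfolding length_Cons sum.lessThan_Suc_shift by simp
  finally show ?case .
qed

lemma sum_nth_eq_sum_count:
  fixes h :: "'a::finite \<Rightarrow> real"
  shows "(\<Sum>i<length xs. h (xs ! i)) = (\<Sum>x\<in>UNIV. real (length (filter (\<lambda>z. z = x) xs)) * h x)"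
proof (induction xs)
  case Nil
  then show ?case by simp
next
  case (Cons a xs)
  have "(\<Sum>x\<in>UNIV. real (length (filter (\<lambda>z. z = x) (a # xs))) * h x)
     = (\<Sum>x\<in>UNIV. (if x = a then h x else 0) + real (length (filter (\<lambda>z. z = x) xs)) * h x)"
    by (intro sum.cong refl) (auto simp: algebra_simps)
  also have "\<dots> = h a + (\<Sum>x\<in>UNIV. real (length (filter (\<lambda>z. z = x) xs)) * h x)"
    by (simp add: sum.distrib sum.delta')
  finally show ?case
    using Cons.IH unfolding length_Cons sum.lessThan_Suc_shift by simp
qed

lemma sum_nth_eq_sum_composition:
  fixes h :: "'a::finite \<Rightarrow> real"
  assumes "xs \<noteq> []"
  shows "(\<Sum>i<length xs. h (xs ! i)) = real (length xs) * (\<Sum>x\<in>UNIV. composition xs x * h x)"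
  using assms by (simp add: sum_nth_eq_sum_count composition_def sum_distrib_left)

lemma composition_nth_pos:
  assumes "i < length xs"
  shows "composition xs (xs ! i) > 0"
proof -
  have "xs ! i \<in> set (filter (\<lambda>z. z = xs ! i) xs)"
    using assms by simp
  then have "length (filter (\<lambda>z. z = xs ! i) xs) > 0"
    by (rule length_pos_if_in_set)
  then show ?thesis
    unfolding composition_def by (intro divide_pos_pos) auto
qed

lemma abs_ln_le_inverse: "0 < (u::real) \<Longrightarrow> u \<le> 1 \<Longrightarrow> \<bar>ln u\<bar> \<le> 1 / u"
  using ln_le_minus_one[of "1 / u"] by (simp add: ln_div)

lemma abs_mult_ln_le: "0 \<le> (s::real) \<Longrightarrow> s \<le> 1 \<Longrightarrow> \<bar>s * ln s\<bar> \<le> 2 * sqrt s"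
proof (cases "s = 0")
  case False
  assume s: "0 \<le> s" "s \<le> 1"
  then have u: "0 < sqrt s" "sqrt s \<le> 1"
    using False by auto
  have "\<bar>s * ln s\<bar> = 2 * s * \<bar>ln (sqrt s)\<bar>"
    using s False by (simp add: ln_sqrt abs_mult)
  also have "\<dots> \<le> 2 * s * (1 / sqrt s)"
    using abs_ln_le_inverse[OF u] s by (intro mult_left_mono) auto
  also have "\<dots> = 2 * sqrt s"
    using s False by (simp add: field_simps)
  finally show ?thesis .
qed simp

lemma mult_ln_square_le: "0 \<le> (s::real) \<Longrightarrow> s \<le> 1 \<Longrightarrow> s * (ln s)\<^sup>2 \<le> 4"
proof (cases "s = 0")
  case False
  assume s: "0 \<le> s" "s \<le> 1"
  then have u: "0 < sqrt s" "sqrt s \<le> 1"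
    using False by auto
  have "s * (ln s)\<^sup>2 = 4 * (sqrt s)\<^sup>2 * \<bar>ln (sqrt s)\<bar>\<^sup>2"
    using s False by (simp add: ln_sqrt power2_eq_square)
  also have "\<dots> \<le> 4 * (sqrt s)\<^sup>2 * (1 / sqrt s)\<^sup>2"
    using abs_ln_le_inverse[OF u] by (intro mult_left_mono power_mono) auto
  also have "\<dots> = 4"
    using u by (simp add: field_simps)
  finally show ?thesis .
qed simp

lemma tendsto_mult_ln:
  fixes t :: "nat \<Rightarrow> real"
  assumes nonneg: "\<And>n. 0 \<le> t n" and lim: "t \<longlonglongrightarrow> a"
  shows "(\<lambda>n. t n * ln (t n)) \<longlonglongrightarrow> a * ln a"
proof (cases "a = 0")
  case True
  have "eventually (\<lambda>n. t n < 1) sequentially"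
    using lim True by (intro order_tendstoD) auto
  then have "eventually (\<lambda>n. norm (t n * ln (t n)) \<le> 2 * sqrt (t n)) sequentially"
    by eventually_elim (use nonneg abs_mult_ln_le in auto)
  moreover have "(\<lambda>n. 2 * sqrt (t n)) \<longlonglongrightarrow> 0"
    using lim True tendsto_mult_right_zero tendsto_real_sqrt by fastforce
  ultimately have "(\<lambda>n. t n * ln (t n)) \<longlonglongrightarrow> 0"
    by (rule Lim_null_comparison)
  then show ?thesis
    using True by simp
next
  case False
  then have "a > 0"
    using nonneg lim by (metis LIMSEQ_le_const less_eq_real_def)
  then show ?thesis
    using lim by (intro tendsto_intros) auto
qed

lemma outdist_nonneg: "is_pd P \<Longrightarrow> is_channel W \<Longrightarrow> 0 \<le> outdist P W y"
  unfolding outdist_def by (intro sum_nonneg) (simp add: is_pd_def channel_nonneg)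

lemma mult_le_outdist: "is_pd P \<Longrightarrow> is_channel W \<Longrightarrow> P x * W y x \<le> outdist P W y"
  unfolding outdist_def by (rule member_le_sum) (auto simp: is_pd_def channel_nonneg)

lemma outdist_pos: "is_pd P \<Longrightarrow> is_channel W \<Longrightarrow> 0 < P x \<Longrightarrow> 0 < W y x \<Longrightarrow> 0 < outdist P W y"
  using mult_le_outdist[of P W x y] by (smt (verit) mult_pos_pos)

lemma outdist_le_1:
  assumes "is_pd P" "is_channel W"
  shows "outdist P W y \<le> 1"
proof -
  have "outdist P W y \<le> (\<Sum>x\<in>UNIV. P x * 1)"
    unfolding outdist_def using assms
    by (intro sum_mono mult_left_mono) (auto simp: is_pd_def channel_le_1)
  then show ?thesis
    using assms by (simp add: is_pd_def)
qed

lemma sum_outdist: "is_pd P \<Longrightarrow> is_channel W \<Longrightarrow> (\<Sum>y\<in>UNIV. outdist P W y) = 1"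
  unfolding outdist_def
  by (subst sum.swap) (simp add: sum_distrib_left[symmetric] channel_sum_1 is_pd_def)

lemma mutual_info_eq_entropy_diff:
  assumes P: "is_pd P" and W: "is_channel W"
  shows "mutual_info P W = (\<Sum>x\<in>UNIV. P x * (\<Sum>y\<in>UNIV. W y x * ln (W y x)))
           - (\<Sum>y\<in>UNIV. outdist P W y * ln (outdist P W y))"
proof -
  have term_eq: "(if P x * W y x = 0 then 0 else P x * W y x * ln (W y x / outdist P W y))
      = P x * (W y x * ln (W y x)) - P x * W y x * ln (outdist P W y)" for x y
  proof (cases "P x * W y x = 0")
    case False
    then have pos: "P x > 0" "W y x > 0"
      using P channel_nonneg[OF W, of y x] by (auto simp: is_pd_def less_eq_real_def)
    then show ?thesis
      using outdist_pos[OF P W pos] by (simp add: ln_div algebra_simps)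
  qed auto
  have "mutual_info P W = (\<Sum>x\<in>UNIV. P x * (\<Sum>y\<in>UNIV. W y x * ln (W y x)))
       - (\<Sum>x\<in>UNIV. \<Sum>y\<in>UNIV. P x * W y x * ln (outdist P W y))"
    unfolding mutual_info_def term_eq by (simp add: sum_subtractf sum_distrib_left)
  also have "(\<Sum>x\<in>UNIV. \<Sum>y\<in>UNIV. P x * W y x * ln (outdist P W y))
      = (\<Sum>y\<in>UNIV. outdist P W y * ln (outdist P W y))"
    unfolding outdist_def by (subst sum.swap) (simp add: sum_distrib_right)
  finally show ?thesis .
qed

lemma mutual_info_le_card:
  fixes W :: "'y::finite \<Rightarrow> 'x::finite \<Rightarrow> real"
  assumes P: "is_pd P" and W: "is_channel W"
  shows "mutual_info P W \<le> 2 * real CARD('y)"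
proof -
  have "ln (W y x) \<le> 0" for x y
    using channel_nonneg[OF W, of y x] channel_le_1[OF W, of y x]
    by (cases "W y x = 0") auto
  then have "(\<Sum>x\<in>UNIV. P x * (\<Sum>y\<in>UNIV. W y x * ln (W y x))) \<le> 0"
    using P W by (intro sum_nonpos mult_nonneg_nonpos) (auto simp: is_pd_def channel_nonneg)
  moreover have "- (outdist P W y * ln (outdist P W y)) \<le> 2" for y
  proof -
    have "sqrt (outdist P W y) \<le> 1"
      using outdist_le_1[OF P W] by simp
    then show ?thesis
      using abs_mult_ln_le[OF outdist_nonneg[OF P W] outdist_le_1[OF P W], of y] by linarith
  qed
  then have "- (\<Sum>y\<in>UNIV. outdist P W y * ln (outdist P W y)) \<le> (\<Sum>y\<in>(UNIV::'y set). 2)"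
    unfolding sum_negf[symmetric] by (rule sum_mono)
  ultimately show ?thesis
    using mutual_info_eq_entropy_diff[OF P W] by simp
qed

lemma tendsto_mutual_info:
  assumes W: "is_channel W" and Ps: "\<And>n. is_pd (Ps n)" and P: "is_pd P"
    and lim: "\<And>x. (\<lambda>n. Ps n x) \<longlonglongrightarrow> P x"
  shows "(\<lambda>n. mutual_info (Ps n) W) \<longlonglongrightarrow> mutual_info P W"
proof -
  have "(\<lambda>n. outdist (Ps n) W y) \<longlonglongrightarrow> outdist P W y" for y
    unfolding outdist_def by (intro tendsto_intros lim)
  then have entropy_lim: "(\<lambda>n. outdist (Ps n) W y * ln (outdist (Ps n) W y))
      \<longlonglongrightarrow> outdist P W y * ln (outdist P W y)" for y
    by (rule tendsto_mult_ln[OF outdist_nonneg[OF Ps W]])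
  then have "(\<lambda>n. (\<Sum>x\<in>UNIV. Ps n x * (\<Sum>y\<in>UNIV. W y x * ln (W y x)))
       - (\<Sum>y\<in>UNIV. outdist (Ps n) W y * ln (outdist (Ps n) W y)))
      \<longlonglongrightarrow> (\<Sum>x\<in>UNIV. P x * (\<Sum>y\<in>UNIV. W y x * ln (W y x)))
       - (\<Sum>y\<in>UNIV. outdist P W y * ln (outdist P W y))"
    by (intro tendsto_diff tendsto_sum tendsto_mult_right lim entropy_lim)
  then show ?thesis
    using mutual_info_eq_entropy_diff[OF Ps W] mutual_info_eq_entropy_diff[OF P W] by simp
qed

lemma mutual_info_le_capacity:
  assumes "is_pd P" "is_channel W"
  shows "mutual_info P W \<le> capacity W"
proof -
  have "bdd_above ((\<lambda>P. mutual_info P W) ` {P. is_pd P})"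
    using mutual_info_le_card assms(2) by (intro bdd_aboveI2) auto
  then show ?thesis
    unfolding capacity_def using assms(1) by (intro cSUP_upper) auto
qed

section \<open>Distributions away from the capacity achieving ones\<close>

lemma is_pd_convergent_subseq:
  fixes Ps :: "nat \<Rightarrow> 'x::finite \<Rightarrow> real"
  assumes pd: "\<And>n. is_pd (Ps n)"
  obtains r P where "strict_mono r" "is_pd P" "\<And>x. (\<lambda>n. Ps (r n) x) \<longlonglongrightarrow> P x"
proof -
  define v :: "nat \<Rightarrow> real^'x" where "v n = (\<chi> x. Ps n x)" for n
  have "v n \<in> cbox 0 1" for n
    unfolding v_def mem_box_cart using pd[of n] is_pd_le_1[of "Ps n"] by (auto simp: is_pd_def)
  then obtain l r where r: "strict_mono r" and lr: "(v \<circ> r) \<longlonglongrightarrow> l"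
    using compact_imp_seq_compact[OF compact_cbox] by (metis seq_compactE)
  have lim: "(\<lambda>n. Ps (r n) x) \<longlonglongrightarrow> l $ x" for x
    using tendsto_vec_nth[OF lr, of x] by (simp add: v_def comp_def)
  have "l $ x \<ge> 0" for x
    using lim[of x] pd by (intro LIMSEQ_le_const) (auto simp: is_pd_def)
  moreover have "(\<lambda>n. \<Sum>x\<in>UNIV. Ps (r n) x) \<longlonglongrightarrow> (\<Sum>x\<in>UNIV. l $ x)"
    by (intro tendsto_sum lim)
  then have "(\<Sum>x\<in>UNIV. l $ x) = 1"
    using pd by (simp add: is_pd_def LIMSEQ_const_iff)
  ultimately have "is_pd (\<lambda>x. l $ x)"
    by (simp add: is_pd_def)
  from r this lim show ?thesis
    by (rule that)
qed

lemma cap_achieving_of_tendsto: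
  assumes W: "is_channel W" and Ps: "\<And>n. is_pd (Ps n)" and P: "is_pd P"
    and lim: "\<And>x. (\<lambda>n. Ps n x) \<longlonglongrightarrow> P x"
    and cap: "(\<lambda>n. mutual_info (Ps n) W) \<longlonglongrightarrow> capacity W"
  shows "P \<in> cap_achieving W"
  using LIMSEQ_unique[OF tendsto_mutual_info[OF W Ps P lim] cap] P
  by (simp add: cap_achieving_def)

lemma dist2_gt_of_S3:
  assumes "Q \<in> S3 W \<delta>" "P \<in> cap_achieving W"
  shows "\<delta> < dist2 Q P"
proof -
  have "(INF Ps\<in>cap_achieving W. dist2 Q Ps) \<le> dist2 Q P"
    using assms(2) by (intro cINF_lower bdd_belowI2[where m = 0]) (auto simp: dist2_def intro: sum_nonneg)
  then show ?thesis
    using assms(1) by (simp add: S3_def)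
qed

lemma mutual_info_gap_S3:
  fixes W :: "'y::finite \<Rightarrow> 'x::finite \<Rightarrow> real"
  assumes W: "is_channel W" and "\<delta> > 0"
  shows "\<exists>\<eta>>0. \<forall>Q\<in>S3 W \<delta>. mutual_info Q W \<le> capacity W - \<eta>"
proof (rule ccontr)
  assume no_gap: "\<not> ?thesis"
  have "\<exists>Q\<in>S3 W \<delta>. capacity W - inverse (real (Suc k)) < mutual_info Q W" for k
  proof -
    have "inverse (real (Suc k)) > 0"
      by simp
    then show ?thesis
      using no_gap by (auto simp: not_le)
  qed
  then obtain Qs where Qs: "\<And>k. Qs k \<in> S3 W \<delta>"
    and near: "\<And>k. capacity W - inverse (real (Suc k)) < mutual_info (Qs k) W"
    by metis
  have pd: "is_pd (Qs k)" for k
    using Qs[of k] by (simp add: S3_def)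
  obtain r P where r: "strict_mono r" and P: "is_pd P" and lim: "\<And>x. (\<lambda>n. Qs (r n) x) \<longlonglongrightarrow> P x"
    using is_pd_convergent_subseq[of Qs] pd by blast
  have lower: "capacity W - inverse (real (Suc n)) \<le> mutual_info (Qs (r n)) W" for n
  proof -
    have "real (Suc n) \<le> real (Suc (r n))"
      using seq_suble[OF r, of n] by simp
    then have "inverse (real (Suc (r n))) \<le> inverse (real (Suc n))"
      by (rule le_imp_inverse_le) simp
    then show ?thesis
      using near[of "r n"] by linarith
  qed
  then have below: "\<forall>n. capacity W - inverse (real (Suc n)) \<le> mutual_info (Qs (r n)) W"
    by blast
  have above: "\<forall>n. mutual_info (Qs (r n)) W \<le> capacity W"
    using mutual_info_le_capacity[OF pd W] by blast
  have "(\<lambda>n. capacity W - inverse (real (Suc n))) \<longlonglongrightarrow> capacity W"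
    using tendsto_diff[OF tendsto_const LIMSEQ_inverse_real_of_nat, of "capacity W"] by simp
  then have "(\<lambda>n. mutual_info (Qs (r n)) W) \<longlonglongrightarrow> capacity W"
    by (rule tendsto_sandwich[OF always_eventually[OF below] always_eventually[OF above] _ tendsto_const])
  then have Pcap: "P \<in> cap_achieving W"
    using cap_achieving_of_tendsto[of W "\<lambda>n. Qs (r n)" P] W pd P lim by blast
  have "(\<lambda>n. dist2 (Qs (r n)) P) \<longlonglongrightarrow> sqrt (\<Sum>x\<in>UNIV. (P x - P x)\<^sup>2)"
    unfolding dist2_def by (intro tendsto_intros lim)
  then have "eventually (\<lambda>n. dist2 (Qs (r n)) P < \<delta>) sequentially"
    using \<open>\<delta> > 0\<close> by (intro order_tendstoD) auto
  then obtain n where "dist2 (Qs (r n)) P < \<delta>"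
    unfolding eventually_sequentially by blast
  with dist2_gt_of_S3[OF Qs[of "r n"] Pcap] show False
    by linarith
qed

section \<open>Information density\<close>

lemma mutual_info_eq_sum_info_dens:
  "mutual_info Q W = (\<Sum>x\<in>UNIV. Q x * (\<Sum>y\<in>UNIV. W y x * info_dens Q W x y))"
  unfolding mutual_info_def info_dens_def
  by (intro sum.cong refl) (auto simp: sum_distrib_left intro!: sum.cong)

lemma info_dens_square_le:
  assumes "is_pd P" "is_channel W"
  shows "(info_dens P W x y)\<^sup>2 \<le> 2 * (ln (W y x))\<^sup>2 + 2 * (ln (outdist P W y))\<^sup>2"
proof (cases "W y x = 0 \<or> outdist P W y = 0")
  case False
  then have "info_dens P W x y = ln (W y x) - ln (outdist P W y)"
    using assms channel_nonneg outdist_nonneg by (simp add: info_dens_def ln_div less_le)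
  moreover have "(a - b)\<^sup>2 \<le> 2 * a\<^sup>2 + 2 * b\<^sup>2" for a b :: real
    using zero_le_power2[of "a + b"] unfolding power2_eq_square by (simp add: algebra_simps)
  ultimately show ?thesis
    by simp
qed (auto simp: info_dens_def)

lemma sum_info_dens_square_le:
  fixes W :: "'y::finite \<Rightarrow> 'x::finite \<Rightarrow> real"
  assumes P: "is_pd P" and W: "is_channel W"
  shows "(\<Sum>x\<in>UNIV. P x * (\<Sum>y\<in>UNIV. W y x * (info_dens P W x y)\<^sup>2)) \<le> 16 * real CARD('y)"
proof -
  have "(\<Sum>x\<in>UNIV. P x * (\<Sum>y\<in>UNIV. W y x * (info_dens P W x y)\<^sup>2))
      \<le> (\<Sum>x\<in>UNIV. \<Sum>y\<in>UNIV. P x * W y x * (2 * (ln (W y x))\<^sup>2 + 2 * (ln (outdist P W y))\<^sup>2))"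
    unfolding sum_distrib_left mult.assoc[symmetric] using P W
    by (intro sum_mono mult_left_mono info_dens_square_le) (auto simp: is_pd_def channel_nonneg)
  also have "\<dots> = 2 * (\<Sum>x\<in>UNIV. P x * (\<Sum>y\<in>UNIV. W y x * (ln (W y x))\<^sup>2))
      + 2 * (\<Sum>y\<in>UNIV. outdist P W y * (ln (outdist P W y))\<^sup>2)"
    unfolding outdist_def
    by (simp add: sum.distrib sum_distrib_left sum_distrib_right algebra_simps) (subst sum.swap, simp)
  also have "\<dots> \<le> 2 * (\<Sum>x\<in>UNIV. P x * (\<Sum>y\<in>(UNIV::'y set). 4)) + 2 * (\<Sum>y\<in>(UNIV::'y set). 4)"
    using P W mult_ln_square_le[OF channel_nonneg[OF W] channel_le_1[OF W]]
      mult_ln_square_le[OF outdist_nonneg[OF P W] outdist_le_1[OF P W]]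
    by (intro add_mono mult_left_mono sum_mono) (auto simp: is_pd_def)
  also have "\<dots> = 16 * real CARD('y)"
    using P by (simp add: is_pd_def sum_distrib_right[symmetric])
  finally show ?thesis .
qed

lemma channel_variance_le:
  assumes "is_channel W"
  shows "(\<Sum>y\<in>UNIV. W y x * (f y - (\<Sum>b\<in>UNIV. W b x * f b))\<^sup>2) \<le> (\<Sum>y\<in>UNIV. W y x * (f y)\<^sup>2)"
proof -
  let ?m = "\<Sum>b\<in>UNIV. W b x * f b"
  have "(\<Sum>y\<in>UNIV. W y x * (f y - ?m)\<^sup>2)
      = (\<Sum>y\<in>UNIV. W y x * (f y)\<^sup>2 - 2 * ?m * (W y x * f y) + ?m\<^sup>2 * W y x)"
    by (intro sum.cong refl) (simp add: power2_eq_square algebra_simps)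
  also have "\<dots> = (\<Sum>y\<in>UNIV. W y x * (f y)\<^sup>2) - ?m\<^sup>2"
    using assms
    by (simp add: sum.distrib sum_subtractf sum_distrib_left[symmetric] channel_sum_1 power2_eq_square)
  finally show ?thesis
    by simp
qed

lemma info_dens_sum_variance_le:
  fixes W :: "'y::finite \<Rightarrow> 'x::finite \<Rightarrow> real"
  assumes W: "is_channel W" and Q: "is_pd Q" and "xs \<noteq> []" and comp: "composition xs = Q"
  shows "(\<Sum>ys | length ys = length xs. chan_prob W xs ys *
           ((\<Sum>i<length xs. info_dens Q W (xs ! i) (ys ! i)) - real (length xs) * mutual_info Q W)\<^sup>2)
         \<le> 16 * real CARD('y) * real (length xs)"
proof -
  define mean where "mean x = (\<Sum>y\<in>UNIV. W y x * info_dens Q W x y)" for x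
  define g where "g x y = info_dens Q W x y - mean x" for x y
  have centered: "(\<Sum>y\<in>UNIV. W y x * g x y) = 0" for x
    unfolding g_def mean_def
    by (simp add: right_diff_distrib sum_subtractf sum_distrib_right[symmetric] channel_sum_1[OF W])
  have "(\<Sum>i<length xs. mean (xs ! i)) = real (length xs) * mutual_info Q W"
    using sum_nth_eq_sum_composition[OF \<open>xs \<noteq> []\<close>, of mean]
    by (simp add: comp mean_def mutual_info_eq_sum_info_dens)
  then have "(\<Sum>i<length xs. info_dens Q W (xs ! i) (ys ! i)) - real (length xs) * mutual_info Q W
      = (\<Sum>i<length xs. g (xs ! i) (ys ! i))" for ys
    by (simp add: g_def sum_subtractf)
  then have "(\<Sum>ys | length ys = length xs. chan_prob W xs ys *
           ((\<Sum>i<length xs. info_dens Q W (xs ! i) (ys ! i)) - real (length xs) * mutual_info Q W)\<^sup>2)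
      = (\<Sum>i<length xs. \<Sum>y\<in>UNIV. W y (xs ! i) * (g (xs ! i) y)\<^sup>2)"
    using sum_chan_prob_centered_square[OF W centered] by simp
  also have "\<dots> = real (length xs) * (\<Sum>x\<in>UNIV. Q x * (\<Sum>y\<in>UNIV. W y x * (g x y)\<^sup>2))"
    using sum_nth_eq_sum_composition[OF \<open>xs \<noteq> []\<close>] by (simp add: comp)
  also have "\<dots> \<le> real (length xs) * (\<Sum>x\<in>UNIV. Q x * (\<Sum>y\<in>UNIV. W y x * (info_dens Q W x y)\<^sup>2))"
    using Q channel_variance_le[OF W, of _ "info_dens Q W _"] unfolding g_def mean_def
    by (intro mult_left_mono[OF sum_mono[OF mult_left_mono]]) (auto simp: is_pd_def)
  also have "\<dots> \<le> real (length xs) * (16 * real CARD('y))"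
    using sum_info_dens_square_le[OF Q W] by (intro mult_left_mono) auto
  finally show ?thesis
    by (simp add: algebra_simps)
qed

lemma channel_le_exp_info_dens:
  assumes Q: "is_pd Q" and W: "is_channel W" and "0 < Q x"
  shows "W y x \<le> exp (info_dens Q W x y) * outdist Q W y"
proof (cases "W y x = 0")
  case True
  then show ?thesis
    using outdist_nonneg[OF Q W] by simp
next
  case False
  then have "0 < W y x"
    using channel_nonneg[OF W, of y x] by simp
  then show ?thesis
    using outdist_pos[OF Q W \<open>0 < Q x\<close> \<open>0 < W y x\<close>] by (simp add: info_dens_def)
qed

lemma chan_prob_le_exp_info_dens:
  assumes Q: "is_pd Q" and W: "is_channel W" and pos: "\<And>i. i < length xs \<Longrightarrow> 0 < Q (xs ! i)"
  shows "chan_prob W xs ys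
    \<le> exp (\<Sum>i<length xs. info_dens Q W (xs ! i) (ys ! i)) * (\<Prod>i<length xs. outdist Q W (ys ! i))"
proof -
  have "chan_prob W xs ys \<le> (\<Prod>i<length xs. exp (info_dens Q W (xs ! i) (ys ! i)) * outdist Q W (ys ! i))"
    unfolding chan_prob_def using channel_nonneg[OF W] channel_le_exp_info_dens[OF Q W pos]
    by (intro prod_mono) auto
  then show ?thesis
    by (simp add: exp_sum prod.distrib)
qed

text \<open>Where the information density sum L exceeds its mean N I(Q;W) by more than t, Chebyshev's
  inequality bounds the probability; elsewhere W^N(y|x) \<le> exp (N I(Q;W) + t) q^N(y).\<close>

lemma sum_chan_prob_le:
  fixes W :: "'y::finite \<Rightarrow> 'x::finite \<Rightarrow> real"
  assumes W: "is_channel W" and Q: "is_pd Q" and "xs \<noteq> []" and comp: "composition xs = Q"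
    and "t > 0" and A: "A \<subseteq> {ys. length ys = length xs}"
  shows "(\<Sum>ys\<in>A. chan_prob W xs ys)
    \<le> 16 * real CARD('y) * real (length xs) / t\<^sup>2
      + exp (real (length xs) * mutual_info Q W + t) * (\<Sum>ys\<in>A. \<Prod>i<length xs. outdist Q W (ys ! i))"
proof -
  define c where "c = real (length xs) * mutual_info Q W"
  define L where "L ys = (\<Sum>i<length xs. info_dens Q W (xs ! i) (ys ! i))" for ys
  define q where "q ys = (\<Prod>i<length xs. outdist Q W (ys ! i))" for ys
  have q_nonneg: "0 \<le> q ys" for ys
    unfolding q_def using outdist_nonneg[OF Q W] by (simp add: prod_nonneg)
  have pointwise: "chan_prob W xs ys \<le> chan_prob W xs ys * (L ys - c)\<^sup>2 / t\<^sup>2 + exp (c + t) * q ys" for ys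
  proof (cases "L ys \<le> c + t")
    case True
    have "chan_prob W xs ys \<le> exp (L ys) * q ys"
      unfolding L_def q_def using chan_prob_le_exp_info_dens[OF Q W] composition_nth_pos comp by blast
    also have "\<dots> \<le> exp (c + t) * q ys"
      using True q_nonneg by (intro mult_right_mono) auto
    finally show ?thesis
      using chan_prob_nonneg[OF W, of xs ys] by (simp add: add_increasing)
  next
    case False
    then have "1 \<le> (L ys - c)\<^sup>2 / t\<^sup>2"
      using \<open>t > 0\<close> by (simp add: power_mono)
    then have "chan_prob W xs ys * 1 \<le> chan_prob W xs ys * ((L ys - c)\<^sup>2 / t\<^sup>2)"
      using chan_prob_nonneg[OF W, of xs ys] by (rule mult_left_mono)
    then show ?thesis
      using q_nonneg[of ys] by (simp add: add_increasing2)
  qed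
  have "(\<Sum>ys\<in>A. chan_prob W xs ys * (L ys - c)\<^sup>2)
      \<le> (\<Sum>ys | length ys = length xs. chan_prob W xs ys * (L ys - c)\<^sup>2)"
    using A chan_prob_nonneg[OF W] by (intro sum_mono2 finite_lists_length_UNIV) auto
  also have "\<dots> \<le> 16 * real CARD('y) * real (length xs)"
    unfolding L_def c_def by (rule info_dens_sum_variance_le[OF W Q \<open>xs \<noteq> []\<close> comp])
  finally have "(\<Sum>ys\<in>A. chan_prob W xs ys * (L ys - c)\<^sup>2) / t\<^sup>2 \<le> 16 * real CARD('y) * real (length xs) / t\<^sup>2"
    by (simp add: divide_right_mono)
  moreover have "(\<Sum>ys\<in>A. chan_prob W xs ys)
      \<le> (\<Sum>ys\<in>A. chan_prob W xs ys * (L ys - c)\<^sup>2 / t\<^sup>2 + exp (c + t) * q ys)"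
    by (rule sum_mono) (rule pointwise)
  then have "(\<Sum>ys\<in>A. chan_prob W xs ys)
      \<le> (\<Sum>ys\<in>A. chan_prob W xs ys * (L ys - c)\<^sup>2) / t\<^sup>2 + exp (c + t) * (\<Sum>ys\<in>A. q ys)"
    by (simp add: sum.distrib sum_divide_distrib sum_distrib_left)
  ultimately show ?thesis
    unfolding c_def q_def by simp
qed

section \<open>Constant composition codes\<close>

lemma avg_error_eq_1_minus_success:
  fixes W :: "'y::finite \<Rightarrow> 'x::finite \<Rightarrow> real"
  assumes W: "is_channel W" and "M > 0" and len: "\<And>m. m \<in> {1..M} \<Longrightarrow> length (enc m) = N"
  shows "avg_error W N M enc dec
    = 1 - (\<Sum>m\<in>{1..M}. \<Sum>ys | length ys = N \<and> dec ys = m. chan_prob W (enc m) ys) / real M"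
proof -
  have "(\<Sum>ys | length ys = N \<and> dec ys \<noteq> m. chan_prob W (enc m) ys)
      = 1 - (\<Sum>ys | length ys = N \<and> dec ys = m. chan_prob W (enc m) ys)" if "m \<in> {1..M}" for m
  proof -
    have "{ys. length ys = N \<and> dec ys \<noteq> m} = {ys. length ys = N} - {ys. length ys = N \<and> dec ys = m}"
      by auto
    moreover have "sum f ({ys. length ys = N} - {ys. length ys = N \<and> dec ys = m})
        = sum f {ys. length ys = N} - sum f {ys. length ys = N \<and> dec ys = m}" for f :: "'y list \<Rightarrow> real"
      by (rule sum_diff) (auto intro: finite_lists_length_UNIV)
    ultimately show ?thesis
      using sum_chan_prob[OF W, of "enc m"] len[OF that] by simp
  qed
  then have "avg_error W N M enc dec
      = (\<Sum>m\<in>{1..M}. 1 - (\<Sum>ys | length ys = N \<and> dec ys = m. chan_prob W (enc m) ys)) / real M"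
    unfolding avg_error_def by simp
  then show ?thesis
    using \<open>M > 0\<close> by (simp add: sum_subtractf diff_divide_distrib)
qed

lemma sum_decoding_regions_le:
  fixes f :: "'a::finite list \<Rightarrow> real"
  assumes "finite S" and nonneg: "\<And>ys. 0 \<le> f ys"
  shows "(\<Sum>m\<in>S. \<Sum>ys | length ys = N \<and> dec ys = m. f ys) \<le> (\<Sum>ys | length ys = N. f ys)"
proof -
  have "(\<Sum>m\<in>S. \<Sum>ys | length ys = N \<and> dec ys = m. f ys)
      = (\<Sum>m\<in>S. \<Sum>ys | length ys = N. if dec ys = m then f ys else 0)"
    by (simp add: sum.inter_filter[OF finite_lists_length_UNIV, symmetric])
  also have "\<dots> = (\<Sum>ys | length ys = N. if dec ys \<in> S then f ys else 0)"
    using \<open>finite S\<close> by (subst sum.swap) (simp add: sum.delta')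
  also have "\<dots> \<le> (\<Sum>ys | length ys = N. f ys)"
    using nonneg by (intro sum_mono) auto
  finally show ?thesis .
qed

lemma one_minus_avg_error_le:
  fixes W :: "'y::finite \<Rightarrow> 'x::finite \<Rightarrow> real"
  assumes W: "is_channel W" and Q: "is_pd Q" and "N > 0" and "M > 0" and "t > 0"
    and code: "\<And>m. m \<in> {1..M} \<Longrightarrow> length (enc m) = N \<and> composition (enc m) = Q"
  shows "1 - avg_error W N M enc dec
    \<le> 16 * real CARD('y) * real N / t\<^sup>2 + exp (real N * mutual_info Q W + t) / real M"
proof -
  define q where "q ys = (\<Prod>i<N. outdist Q W (ys ! i))" for ys :: "'y list"
  define K where "K = 16 * real CARD('y) * real N / t\<^sup>2"
  define E where "E = exp (real N * mutual_info Q W + t)"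
  let ?succ = "\<lambda>m. \<Sum>ys | length ys = N \<and> dec ys = m. chan_prob W (enc m) ys"
  have "?succ m \<le> K + E * (\<Sum>ys | length ys = N \<and> dec ys = m. q ys)" if "m \<in> {1..M}" for m
  proof -
    have len: "length (enc m) = N" and comp: "composition (enc m) = Q"
      using code[OF that] by auto
    then have "enc m \<noteq> []"
      using \<open>N > 0\<close> by auto
    moreover have "{ys. length ys = N \<and> dec ys = m} \<subseteq> {ys. length ys = length (enc m)}"
      using len by auto
    ultimately show ?thesis
      using sum_chan_prob_le[OF W Q _ comp \<open>t > 0\<close>] unfolding K_def E_def q_def len by blast
  qed
  then have "(\<Sum>m\<in>{1..M}. ?succ m) \<le> (\<Sum>m\<in>{1..M}. K + E * (\<Sum>ys | length ys = N \<and> dec ys = m. q ys))"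
    by (rule sum_mono)
  also have "\<dots> = real M * K + E * (\<Sum>m\<in>{1..M}. \<Sum>ys | length ys = N \<and> dec ys = m. q ys)"
    by (simp add: sum.distrib sum_distrib_left)
  also have "\<dots> \<le> real M * K + E * (\<Sum>ys | length ys = N. q ys)"
    unfolding E_def q_def using outdist_nonneg[OF Q W]
    by (intro add_left_mono mult_left_mono sum_decoding_regions_le) (auto intro: prod_nonneg)
  also have "(\<Sum>ys | length ys = N. q ys) = 1"
    unfolding q_def using sum_lists_length_prod[of "\<lambda>i y. outdist Q W y" N] by (simp add: sum_outdist[OF Q W])
  finally have "(\<Sum>m\<in>{1..M}. ?succ m) / real M \<le> K + E / real M"
    using \<open>M > 0\<close> by (simp add: divide_le_eq algebra_simps)
  then show ?thesis
    using avg_error_eq_1_minus_success[OF W \<open>M > 0\<close>] code unfolding K_def E_def by simp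
qed

lemma eventually_abs_sqrt_div_less:
  assumes "\<eta> > 0"
  shows "eventually (\<lambda>N. \<bar>sqrt (V / real N) * c\<bar> < \<eta>) sequentially"
proof -
  have "(\<lambda>N. sqrt (V / real N) * c) \<longlonglongrightarrow> sqrt 0 * c"
    by (intro tendsto_intros)
  then show ?thesis
    using assms by (intro order_tendstoD(2)[OF tendsto_rabs_zero]) auto
qed

lemma exp_num_msgs_le: "exp (real N * R) \<le> real (num_msgs N R)"
  unfolding num_msgs_def by (rule real_nat_ceiling_ge)

lemma avg_error_ge_of_rate_gap:
  fixes W :: "'y::finite \<Rightarrow> 'x::finite \<Rightarrow> real"
  assumes W: "is_channel W" and Q: "is_pd Q" and "N > 0" and "\<gamma> > 0"
    and gap: "mutual_info Q W + \<gamma> \<le> R" and M: "exp (real N * R) \<le> real M"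
    and code: "\<And>m. m \<in> {1..M} \<Longrightarrow> length (enc m) = N \<and> composition (enc m) = Q"
  shows "1 - (64 * real CARD('y) / \<gamma>\<^sup>2 + 2 / \<gamma>) / real N \<le> avg_error W N M enc dec"
proof -
  define t where "t = real N * \<gamma> / 2"
  have "t > 0"
    unfolding t_def using \<open>N > 0\<close> \<open>\<gamma> > 0\<close> by simp
  have "real M > 0"
    using M exp_gt_zero[of "real N * R"] by linarith
  have "16 * real CARD('y) * real N / t\<^sup>2 = 64 * real CARD('y) / \<gamma>\<^sup>2 / real N"
    unfolding t_def using \<open>N > 0\<close> \<open>\<gamma> > 0\<close> by (simp add: field_simps power2_eq_square)
  moreover have "exp (real N * mutual_info Q W + t) / real M \<le> 2 / \<gamma> / real N"
  proof -
    have "exp (real N * mutual_info Q W + t) / real M \<le> exp (real N * mutual_info Q W + t) / exp (real N * R)"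
      using M \<open>real M > 0\<close> by (intro divide_left_mono) auto
    also have "\<dots> \<le> exp (- t)"
      using gap \<open>N > 0\<close> mult_left_mono[OF gap, of "real N"]
      by (simp add: t_def exp_diff[symmetric] algebra_simps)
    also have "\<dots> \<le> 1 / t"
      using exp_ge_add_one_self[of t] \<open>t > 0\<close> by (simp add: exp_minus field_simps del: exp_ge_add_one_self)
    finally show ?thesis
      unfolding t_def using \<open>N > 0\<close> by (simp add: field_simps)
  qed
  moreover have "1 - avg_error W N M enc dec
      \<le> 16 * real CARD('y) * real N / t\<^sup>2 + exp (real N * mutual_info Q W + t) / real M"
    using \<open>real M > 0\<close> code by (intro one_minus_avg_error_le[OF W Q \<open>N > 0\<close> _ \<open>t > 0\<close>]) auto
  ultimately show ?thesis
    by (simp add: add_divide_distrib)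
qed

theorem lemma12:
  fixes W :: "'y::finite \<Rightarrow> 'x::finite \<Rightarrow> real" and \<delta> \<epsilon> :: real
  assumes "is_channel W" and "capacity W > 0" and "\<delta> > 0" and "0 < \<epsilon>" and "\<epsilon> < 1"
  shows "\<exists>N0::nat. N0 \<ge> 1 \<and> (\<forall>N\<ge>N0. \<forall>(Q::'x \<Rightarrow> real) (enc::nat \<Rightarrow> 'x list) (dec::'y list \<Rightarrow> nat).
     (let R = capacity W + sqrt (V_eps \<epsilon> W / real N) * Phi_inv \<epsilon> in
       cc_code N R Q enc dec \<and> Q \<in> S3 W \<delta> \<longrightarrow> avg_error W N (num_msgs N R) enc dec > \<epsilon>))"
proof -
  note W = \<open>is_channel W\<close>
  obtain \<eta> where "\<eta> > 0" and gap: "\<And>Q. Q \<in> S3 W \<delta> \<Longrightarrow> mutual_info Q W \<le> capacity W - \<eta>"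
    using mutual_info_gap_S3[OF W \<open>\<delta> > 0\<close>] by blast
  define K where "K = 64 * real CARD('y) / (\<eta> / 2)\<^sup>2 + 2 / (\<eta> / 2)"
  \<comment> \<open>Only R_N \<rightarrow> C(W) matters, whatever the values of V_eps and Phi_inv.\<close>
  have "eventually (\<lambda>N.
      \<bar>sqrt (V_eps \<epsilon> W / real N) * Phi_inv \<epsilon>\<bar> < \<eta> / 2 \<and> K / real N < 1 - \<epsilon>) sequentially"
    using \<open>\<eta> > 0\<close> \<open>\<epsilon> < 1\<close>
    by (intro eventually_conj eventually_abs_sqrt_div_less order_tendstoD(2)[OF lim_const_over_n]) auto
  then obtain N0 where N0: "\<And>N. N \<ge> N0 \<Longrightarrow>
      \<bar>sqrt (V_eps \<epsilon> W / real N) * Phi_inv \<epsilon>\<bar> < \<eta> / 2 \<and> K / real N < 1 - \<epsilon>"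
    unfolding eventually_sequentially by blast
  have "\<epsilon> < avg_error W N (num_msgs N R) enc dec"
    if "N \<ge> Suc N0" and R: "R = capacity W + sqrt (V_eps \<epsilon> W / real N) * Phi_inv \<epsilon>"
      and code: "cc_code N R Q enc dec" and "Q \<in> S3 W \<delta>" for N R Q enc dec
  proof -
    have "mutual_info Q W + \<eta> / 2 \<le> R"
      using gap[OF \<open>Q \<in> S3 W \<delta>\<close>] N0[of N] R \<open>N \<ge> Suc N0\<close> by (auto simp: abs_less_iff)
    then have "1 - K / real N \<le> avg_error W N (num_msgs N R) enc dec"
      unfolding K_def using \<open>\<eta> > 0\<close> \<open>N \<ge> Suc N0\<close> \<open>Q \<in> S3 W \<delta>\<close> code
      by (intro avg_error_ge_of_rate_gap[OF W _ _ _ _ exp_num_msgs_le]) (auto simp: cc_code_def S3_def)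
    then show ?thesis
      using N0[of N] \<open>N \<ge> Suc N0\<close> by linarith
  qed
  then show ?thesis
    by (intro exI[of _ "Suc N0"]) (auto simp: Let_def)
qed

end
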